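(* Let $\Bbbk$ be a field, $\mathcal A$ a $\Bbbk$-algebra, and $f(t)=1+\sum_{k\ge 1}a_kt^k\in\Bbbk[[t]]$ with $a_k\ne 0$ for all $k\ge 1$. For $k\ge 1$ let $P_{f,k}(t)$ be the polynomial $$P_{f,k}(t)=(-1)^k\det\begin{pmatrix} 1&a_1t&a_2t^2&\ldots &a_kt^k\\ 1&a_1&a_2&\ldots &a_k\\ 0&1&a_1&\ldots &a_{k-1}\\ \vdots&\vdots&\ddots&\ddots&\vdots\\ 0&0&\ldots &1&a_1 \end{pmatrix},$$ and let ${\bf q}_k=\{q_{1k},\dots,q_{kk}\}$ be its roots (with multiplicity, in an algebraic closure of $\Bbbk$). Then for all $x,y\in\mathcal A$, $$f(x)\,y\,f(x)^{-1}=y+\sum_{k\ge 1}a_k\,(\mathrm{ad}\,x)^{{\bf q}_k}(y).$$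
   Context: For $q\in\Bbbk$ put $[a,b]_q=ab-qba$. For ${\bf q}=\{q_1,\dots,q_k\}$, $(\mathrm{ad}\,x)^{\bf q}(y)=[x,[x,\ldots,[x,y]_{q_1},\ldots]_{q_{k-1}}]_{q_k}$, which equals $\sum_{j=0}^k(-1)^je_j(q_1,\dots,q_k)\,x^{k-j}yx^j$ ($e_j$ the $j$-th elementary symmetric function); since the elementary symmetric functions of the roots of $P_{f,k}$ lie in $\Bbbk$, this operator is defined over $\Bbbk$. The infinite sums are understood formally: e.g. replace $x$ by $\tau x$ for a formal variable $\tau$, so that both sides are identities in $\mathcal A[[\tau]]$ (the $k$-th term acquiring the factor $\tau^k$). *)

theory Defs
  imports "HOL-Algebra.Algebraic_Closure_Type"
          "HOL-Computational_Algebra.Formal_Power_Series"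
          "Jordan_Normal_Form.Determinant"
begin

text \<open>The sequence a is indexed from 0 with the convention a 0 = 1 (so f = sum a_n t^n).\<close>
definition Pmat :: "(nat \<Rightarrow> 'k::field) \<Rightarrow> nat \<Rightarrow> 'k poly mat" where
  "Pmat a k = mat (k+1) (k+1) (\<lambda>(i,j).
      if i = 0 then monom (a j) j
      else if i - 1 \<le> j then [: a (j + 1 - i) :] else 0)"

definition Pfk :: "(nat \<Rightarrow> 'k::field) \<Rightarrow> nat \<Rightarrow> 'k poly" where
  "Pfk a k = smult ((-1) ^ k) (det (Pmat a k))"

definition esym :: "nat \<Rightarrow> nat \<Rightarrow> (nat \<Rightarrow> 'b::comm_ring_1) \<Rightarrow> 'b" where
  "esym j k q = (\<Sum>S\<in>{S. S \<subseteq> {1..k} \<and> card S = j}. \<Prod>i\<in>S. q i)"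

text \<open>(ad x)^{q}(y) = sum_j (-1)^j e_j(q) x^(k-j) y x^j, for q = (q_1..q_k) roots in the
  algebraic closure; the scalars e_j(q) lie in k and act on A via the structure map phi.\<close>
definition adq :: "('k::field \<Rightarrow> 'a::ring_1) \<Rightarrow> nat \<Rightarrow> (nat \<Rightarrow> 'k alg_closure) \<Rightarrow> 'a \<Rightarrow> 'a \<Rightarrow> 'a" where
  "adq phi k q x y = (\<Sum>j=0..k. (-1) ^ j * phi (of_ac (esym j k q)) * x ^ (k - j) * y * x ^ j)"

end

theory Submission
  imports Defs
begin

text \<open>Write \<open>1/f = \<Sum> b_k t^k\<close>. The matrix defining \<open>P_{f,k}\<close> maps the column
  \<open>(b_k, ..., b_0)\<close> to \<open>(\<Sum>_i a_i b_{k-i} t^i, 0, ..., 0)\<close>, since its lower rows pick out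
  the vanishing coefficients of \<open>f \<cdot> 1/f = 1\<close>; as \<open>b_0 = 1\<close> and the complementary minor is
  unitriangular, Cramer's rule gives \<open>P_{f,k}(t) = \<Sum>_i a_i b_{k-i} t^i\<close>. This polynomial has
  leading coefficient \<open>a_k\<close> and roots \<open>q_k\<close>, so by Vieta's formulas
  \<open>a_{k-j} b_j = a_k (-1)^j e_j(q_k)\<close>. Hence the degree-\<open>k\<close> part
  \<open>\<Sum>_j a_{k-j} b_j x^{k-j} y x^j\<close> of \<open>f(x) y f(x)^{-1}\<close> is \<open>a_k (ad x)^{q_k}(y)\<close>.\<close>

lemma esym_0 [simp]: "esym 0 n r = 1"
proof -
  have "{S. S \<subseteq> {1..n} \<and> card S = 0} = {{}}"
    using finite_subset[of _ "{1..n}"] by fastforce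
  then show ?thesis by (simp add: esym_def)
qed

lemma coeff_prod_linear_factors:
  fixes r :: "nat \<Rightarrow> 'a::comm_ring_1"
  assumes "j \<le> n"
  shows "coeff (\<Prod>i=1..n. [:- r i, 1:]) (n - j) = (-1) ^ j * esym j n r"
proof -
  let ?A = "{1..n}"
  have "(\<Prod>i\<in>?A. [:- r i, 1:]) = (\<Prod>i\<in>?A. [:- r i:] + [:0, 1:])"
    by simp
  also have "\<dots> = (\<Sum>S\<in>Pow ?A. monom (\<Prod>i\<in>S. - r i) (card (?A - S)))"
    by (subst prod_add) (simp_all add: prod_to_poly monom_altdef)
  finally have "coeff (\<Prod>i\<in>?A. [:- r i, 1:]) (n - j)
      = (\<Sum>S\<in>Pow ?A. if card (?A - S) = n - j then \<Prod>i\<in>S. - r i else 0)"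
    by (simp add: coeff_sum)
  also have "\<dots> = (\<Sum>S\<in>Pow ?A. if card S = j then \<Prod>i\<in>S. - r i else 0)"
  proof (intro sum.cong refl)
    fix S assume "S \<in> Pow ?A"
    then have "card (?A - S) = n - card S" and "card S \<le> n"
      using card_mono[of ?A S] by (auto simp: card_Diff_subset finite_subset)
    then show "(if card (?A - S) = n - j then \<Prod>i\<in>S. - r i else 0)
        = (if card S = j then \<Prod>i\<in>S. - r i else 0)"
      using assms by auto
  qed
  also have "\<dots> = (\<Sum>S\<in>{S. S \<subseteq> ?A \<and> card S = j}. \<Prod>i\<in>S. - r i)"
    by (simp add: sum.inter_filter[symmetric] Pow_def)
  also have "\<dots> = (-1) ^ j * esym j n r"
    by (simp add: esym_def prod_uminus sum_distrib_left)
  finally show ?thesis .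
qed

lemma coeff_split_poly_eq_esym:
  fixes p :: "'k::field poly" and r :: "nat \<Rightarrow> 'k alg_closure"
  assumes split: "map_poly to_ac p = smult (lead_coeff (map_poly to_ac p)) (\<Prod>i=1..n. [:- r i, 1:])"
    and top: "coeff p n \<noteq> 0" and "j \<le> n"
  shows "coeff p (n - j) = coeff p n * (-1) ^ j * of_ac (esym j n r)"
proof -
  let ?L = "lead_coeff (map_poly to_ac p)"
  have coeff_eq: "to_ac (coeff p (n - i)) = ?L * ((-1) ^ i * esym i n r)" if "i \<le> n" for i
    using arg_cong[OF split, of "\<lambda>p. coeff p (n - i)"]
    unfolding coeff_smult coeff_prod_linear_factors[OF that] by (simp add: coeff_map_poly)
  then have "?L = to_ac (coeff p n)"
    using coeff_eq[of 0] by simp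
  with coeff_eq[OF \<open>j \<le> n\<close>] top
  have "esym j n r = to_ac (coeff p (n - j) / (coeff p n * (-1) ^ j))"
    by (simp add: field_simps)
  then have "of_ac (esym j n r) = coeff p (n - j) / (coeff p n * (-1) ^ j)"
    by (simp add: of_ac_eqI)
  with top show ?thesis
    by (simp add: field_simps)
qed

lemma fps_mult_nth_shifted:
  fixes a b :: "nat \<Rightarrow> 'a::comm_ring_1"
  shows "(\<Sum>c<d + m + 1. (if d \<le> c then a (c - d) else 0) * b (d + m - c))
    = (Abs_fps a * Abs_fps b) $ m"
proof -
  have "(\<Sum>c<d + m + 1. (if d \<le> c then a (c - d) else 0) * b (d + m - c))
      = (\<Sum>c=0+d..m+d. a (c - d) * b (d + m - c))"
    by (rule sum.mono_neutral_cong_right) auto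
  also have "\<dots> = (\<Sum>i=0..m. a i * b (m - i))"
    by (subst sum.shift_bounds_cl_nat_ivl) simp
  finally show ?thesis
    by (simp add: fps_mult_nth)
qed

lemma Pmat_mult_vec_inverse_coeffs:
  fixes a :: "nat \<Rightarrow> 'k::field" and B :: "'k fps"
  assumes inv: "Abs_fps a * B = 1"
  shows "Pmat a n *\<^sub>v vec (n + 1) (\<lambda>c. [:B $ (n - c):])
    = vec (n + 1) (\<lambda>i. if i = 0 then \<Sum>c=0..n. monom (a c * B $ (n - c)) c else 0)"
proof (rule eq_vecI)
  fix i assume "i < dim_vec (vec (n + 1) (\<lambda>i. if i = 0 then \<Sum>c=0..n. monom (a c * B $ (n - c)) c else 0))"
  then have i: "i < n + 1" by simp
  have "(Pmat a n *\<^sub>v vec (n + 1) (\<lambda>c. [:B $ (n - c):])) $ i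
      = (\<Sum>c<n + 1. Pmat a n $$ (i, c) * [:B $ (n - c):])"
    using i by (simp add: Pmat_def scalar_prod_def atLeast0LessThan)
  also have "\<dots> = (if i = 0 then \<Sum>c=0..n. monom (a c * B $ (n - c)) c else 0)"
  proof (cases "i = 0")
    case True
    then show ?thesis
      by (simp add: Pmat_def smult_monom mult.commute lessThan_Suc_atMost atLeast0AtMost)
  next
    case False
    have "Pmat a n $$ (i, c) * [:B $ (n - c):]
        = [:(if i - 1 \<le> c then a (c - (i - 1)) else 0) * B $ ((i - 1) + (n + 1 - i) - c):]"
      if "c < n + 1" for c
      using False i that by (simp add: Pmat_def Suc_diff_le)
    then have "(\<Sum>c<n + 1. Pmat a n $$ (i, c) * [:B $ (n - c):])
        = [:\<Sum>c<(i - 1) + (n + 1 - i) + 1. (if i - 1 \<le> c then a (c - (i - 1)) else 0)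
              * B $ ((i - 1) + (n + 1 - i) - c):]"
      using False i by (simp add: sum_to_poly)
    also have "\<dots> = [:(Abs_fps a * B) $ (n + 1 - i):]"
      by (simp only: fps_mult_nth_shifted[where b = "fps_nth B"] fps_nth_inverse)
    also have "\<dots> = 0"
      using False i inv by simp
    finally show ?thesis using False by simp
  qed
  finally show "(Pmat a n *\<^sub>v vec (n + 1) (\<lambda>c. [:B $ (n - c):])) $ i
      = vec (n + 1) (\<lambda>i. if i = 0 then \<Sum>c=0..n. monom (a c * B $ (n - c)) c else 0) $ i"
    using i by simp
qed (simp add: Pmat_def)

lemma det_Pmat_minor:
  assumes "a 0 = 1"
  shows "det (mat_delete (Pmat a n) 0 n) = 1"
proof -
  let ?D = "mat_delete (Pmat a n) 0 n"
  have D: "?D \<in> carrier_mat n n"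
    by (simp add: mat_delete_def Pmat_def)
  have D_entry: "?D $$ (i, j) = (if i \<le> j then [:a (j - i):] else 0)" if "i < n" "j < n" for i j
    using that by (auto simp: mat_delete_def Pmat_def Suc_diff_le)
  have "upper_triangular ?D"
    using D D_entry by (auto simp: upper_triangular_def)
  then have "det ?D = prod_list (diag_mat ?D)"
    using det_upper_triangular D by blast
  also have "\<dots> = (\<Prod>i=0..<n. ?D $$ (i, i))"
    by (simp only: prod_list_diag_prod carrier_matD(1)[OF D])
  also have "\<dots> = 1"
    using D_entry assms by (intro prod.neutral) (simp add: one_pCons[symmetric])
  finally show ?thesis .
qed

lemma Pfk_eq_sum_monom:
  fixes a :: "nat \<Rightarrow> 'k::field" and B :: "'k fps"
  assumes a0: "a 0 = 1" and inv: "Abs_fps a * B = 1"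
  shows "Pfk a n = (\<Sum>c=0..n. monom (a c * B $ (n - c)) c)"
proof -
  define s where "s = (\<Sum>c=0..n. monom (a c * B $ (n - c)) c)"
  define v where "v = vec (n + 1) (\<lambda>i. if i = 0 then s else 0)"
  let ?M = "Pmat a n"
  let ?R = "replace_col ?M v n"
  have M: "?M \<in> carrier_mat (n + 1) (n + 1)"
    by (simp add: Pmat_def)
  then have R: "?R \<in> carrier_mat (n + 1) (n + 1)"
    by (simp add: replace_col_def)
  define w where "w = vec (n + 1) (\<lambda>c. [:B $ (n - c):])"
  have "?M *\<^sub>v w = v"
    unfolding w_def v_def s_def by (rule Pmat_mult_vec_inverse_coeffs[OF inv])
  moreover have "B $ 0 = 1"
    using arg_cong[OF inv, of "\<lambda>f. fps_nth f 0"] a0 by simp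
  ultimately have "det ?M = det ?R"
    using cramer_lemma_mat[OF M, of w n] by (simp add: w_def)
  also have "\<dots> = (\<Sum>i<n + 1. ?R $$ (i, n) * cofactor ?R i n)"
    by (rule laplace_expansion_column[OF R]) simp
  also have "\<dots> = (\<Sum>i<n + 1. if i = 0 then s * cofactor ?R 0 n else 0)"
    using M by (intro sum.cong refl) (simp add: replace_col_def v_def)
  also have "mat_delete ?R 0 n = mat_delete ?M 0 n"
    using M by (intro eq_matI) (auto simp: mat_delete_def replace_col_def)
  then have "cofactor ?R 0 n = (-1) ^ n"
    by (simp add: cofactor_def det_Pmat_minor[of a n, OF a0])
  finally have "det ?M = (-1) ^ n * s"
    by simp
  then show ?thesis
    unfolding Pfk_def s_def by (cases "even n") simp_all
qed

lemma inverse_coeff_eq_esym: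
  fixes a :: "nat \<Rightarrow> 'k::field" and r :: "nat \<Rightarrow> 'k alg_closure"
  assumes a0: "a 0 = 1" and top: "a n \<noteq> 0"
    and split: "map_poly to_ac (Pfk a n)
      = smult (lead_coeff (map_poly to_ac (Pfk a n))) (\<Prod>i=1..n. [:- r i, 1:])"
    and "j \<le> n"
  shows "a (n - j) * inverse (Abs_fps a) $ j = a n * (-1) ^ j * of_ac (esym j n r)"
proof -
  have inv: "Abs_fps a * inverse (Abs_fps a) = 1"
    using a0 by (simp add: inverse_mult_eq_1')
  have coeff_Pfk: "coeff (Pfk a n) c = a c * inverse (Abs_fps a) $ (n - c)" if "c \<le> n" for c
    using that by (simp add: Pfk_eq_sum_monom[OF a0 inv] coeff_sum)
  show ?thesis
    using coeff_split_poly_eq_esym[OF split _ \<open>j \<le> n\<close>] top a0 \<open>j \<le> n\<close>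
    by (simp add: coeff_Pfk)
qed

locale central_ring_hom = ring_hom hom for hom :: "'a::ring_1 \<Rightarrow> 'b::ring_1" +
  assumes hom_central: "hom c * z = z * hom c"
begin

definition fps_specialize :: "'b \<Rightarrow> 'a fps \<Rightarrow> 'b fps" where
  "fps_specialize x f = Abs_fps (\<lambda>n. hom (f $ n) * x ^ n)"

lemma fps_specialize_nth [simp]: "fps_specialize x f $ n = hom (f $ n) * x ^ n"
  by (simp add: fps_specialize_def)

lemma fps_specialize_one [simp]: "fps_specialize x 1 = 1"
  by (rule fps_ext) simp

lemma hom_mult_power_commute:
  "hom c * x ^ i * (hom d * x ^ j) = hom (c * d) * x ^ (i + j)"
proof -
  have "hom c * x ^ i * (hom d * x ^ j) = hom c * (x ^ i * hom d) * x ^ j"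
    by (simp add: mult.assoc)
  also have "\<dots> = hom (c * d) * x ^ (i + j)"
    by (simp add: hom_central[of d] hom_mult power_add mult.assoc)
  finally show ?thesis .
qed

lemma fps_specialize_mult:
  "fps_specialize x (f * g) = fps_specialize x f * fps_specialize x g"
proof (rule fps_ext)
  fix n
  have "fps_specialize x (f * g) $ n = (\<Sum>i=0..n. hom (f $ i * g $ (n - i)) * x ^ n)"
    by (simp add: fps_mult_nth hom_sum sum_distrib_right)
  also have "\<dots> = (\<Sum>i=0..n. hom (f $ i) * x ^ i * (hom (g $ (n - i)) * x ^ (n - i)))"
    by (intro sum.cong refl) (simp add: hom_mult_power_commute)
  finally show "fps_specialize x (f * g) $ n = (fps_specialize x f * fps_specialize x g) $ n"
    by (simp add: fps_mult_nth)
qed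

lemma fps_specialize_conj_nth:
  "(fps_specialize x f * fps_const y * fps_specialize x g) $ n
     = (\<Sum>j=0..n. hom (f $ (n - j) * g $ j) * x ^ (n - j) * y * x ^ j)"
proof -
  have "(fps_specialize x f * fps_const y * fps_specialize x g) $ n
      = (\<Sum>i=0..n. hom (f $ i) * x ^ i * y * (hom (g $ (n - i)) * x ^ (n - i)))"
    by (simp add: fps_mult_nth[of "fps_specialize x f * fps_const y"])
  also have "\<dots> = (\<Sum>j=0..n. hom (f $ (n - j)) * x ^ (n - j) * y * (hom (g $ j) * x ^ j))"
    by (subst sum.atLeastAtMost_rev) (intro sum.cong refl, simp)
  also have "\<dots> = (\<Sum>j=0..n. hom (f $ (n - j) * g $ j) * x ^ (n - j) * y * x ^ j)"
    by (intro sum.cong refl) (simp add: hom_central[of "g $ _"] hom_mult mult.assoc)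
  finally show ?thesis .
qed

end

lemma mult_adq_eq_sum:
  fixes phi :: "'k::field \<Rightarrow> 'a::ring_1"
  assumes "central_ring_hom phi"
  shows "phi c * adq phi n r x y
    = (\<Sum>j=0..n. phi (c * (-1) ^ j * of_ac (esym j n r)) * x ^ (n - j) * y * x ^ j)"
proof -
  interpret central_ring_hom phi by fact
  show ?thesis
    by (simp add: adq_def sum_distrib_left hom_distribs mult.assoc)
qed

theorem theorem1p2:
  fixes phi :: "'k::field \<Rightarrow> 'a::ring_1"
    and a :: "nat \<Rightarrow> 'k"
    and q :: "nat \<Rightarrow> nat \<Rightarrow> 'k alg_closure"
    and x y :: 'a
  assumes phi_1: "phi 1 = 1"
    and phi_add: "\<And>c d. phi (c + d) = phi c + phi d"
    and phi_mult: "\<And>c d. phi (c * d) = phi c * phi d"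
    and phi_central: "\<And>c z. phi c * z = z * phi c"
    and a0: "a 0 = 1"
    and a_nz: "\<And>k. k \<ge> 1 \<Longrightarrow> a k \<noteq> 0"
    and roots: "\<And>k. k \<ge> 1 \<Longrightarrow>
        map_poly to_ac (Pfk a k) =
        smult (lead_coeff (map_poly to_ac (Pfk a k))) (\<Prod>i=1..k. [:- q k i, 1:])"
  shows "Abs_fps (\<lambda>n. phi (a n) * x ^ n) * fps_const y
           * fps_right_inverse (Abs_fps (\<lambda>n. phi (a n) * x ^ n)) 1
         = Abs_fps (\<lambda>n. if n = 0 then y else phi (a n) * adq phi n (q n) x y)"
proof -
  have phi_0: "phi 0 = 0"
    using phi_add[of 0 0] by simp
  interpret phi: central_ring_hom phi
    by unfold_locales (fact phi_0 phi_1 phi_mult phi_add phi_central)+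
  define B where "B = inverse (Abs_fps a)"
  have inv: "Abs_fps a * B = 1" and B0: "B $ 0 = 1"
    using a0 by (simp_all add: B_def inverse_mult_eq_1')
  have F: "Abs_fps (\<lambda>n. phi (a n) * x ^ n) = phi.fps_specialize x (Abs_fps a)"
    by (simp add: phi.fps_specialize_def)
  have R: "fps_right_inverse (phi.fps_specialize x (Abs_fps a)) 1 = phi.fps_specialize x B"
    using fps_lr_inverse_unique_ring1(2)[of "phi.fps_specialize x (Abs_fps a)" "phi.fps_specialize x B"]
    by (simp add: phi.fps_specialize_mult[symmetric] inv B0 a0)
  have "(phi.fps_specialize x (Abs_fps a) * fps_const y * phi.fps_specialize x B) $ n
      = (if n = 0 then y else phi (a n) * adq phi n (q n) x y)" for n
  proof -
    have "phi (a (n - j) * B $ j) = phi (a n * (-1) ^ j * of_ac (esym j n (q n)))"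
      if "1 \<le> n" "j \<le> n" for j
      using inverse_coeff_eq_esym[OF a0 a_nz roots, of n j] that by (simp add: B_def)
    then show ?thesis
      unfolding phi.fps_specialize_conj_nth mult_adq_eq_sum[OF phi.central_ring_hom_axioms]
      by (cases "n = 0") (auto simp: a0 B0 intro!: sum.cong)
  qed
  then show ?thesis
    unfolding F R by (intro fps_ext) simp
qed

end
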